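(* Let $U_1,U_2,V_1,V_2$ be four real random variables defined on a common probability space such that (1) $U_1$ and $U_2$ have the same distribution, and (2) for all $i,j\in\{1,2\}$, $U_i$ and $V_j$ are independent. If $U_1+V_1=U_2+V_2$ almost surely, then $U_1=U_2$ almost surely. *)

theory Defs
  imports "HOL-Probability.Probability"
begin

end

theory Submission
  imports Defs
begin

text \<open>
  Apply a bounded strictly increasing map \<open>f\<close> (here \<open>arctan\<close>; boundedness makes every
  expectation below finite) to all four variables. By
  independence and equality of the distributions of \<open>U\<^sub>1\<close> and \<open>U\<^sub>2\<close>, the product
  \<open>(f U\<^sub>1 - f U\<^sub>2) (f V\<^sub>2 - f V\<^sub>1)\<close> has expectation zero. Since \<open>U\<^sub>1 - U\<^sub>2 = V\<^sub>2 - V\<^sub>1\<close> almost surely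
  and \<open>f\<close> is increasing, both factors have the same sign, so the product is almost surely
  nonnegative, hence almost surely zero, which forces \<open>U\<^sub>1 = U\<^sub>2\<close>.
\<close>

lemma strict_mono_cross_diff_nonneg:
  fixes f :: "real \<Rightarrow> real"
  assumes "strict_mono f" and "u1 + v1 = u2 + v2"
  shows "0 \<le> (f u1 - f u2) * (f v2 - f v1)"
proof (cases "u1 \<le> u2")
  case True
  with assms have "f u1 \<le> f u2" "f v2 \<le> f v1"
    by (auto intro: strict_mono_mono[THEN monoD])
  then show ?thesis by (intro mult_nonpos_nonpos) auto
next
  case False
  with assms have "f u2 \<le> f u1" "f v1 \<le> f v2"
    by (auto intro: strict_mono_mono[THEN monoD])
  then show ?thesis by (intro mult_nonneg_nonneg) auto
qed

lemma strict_mono_cross_diff_eq_0_imp_eq: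
  fixes f :: "real \<Rightarrow> real"
  assumes "strict_mono f" and "u1 + v1 = u2 + v2"
    and "(f u1 - f u2) * (f v2 - f v1) = 0"
  shows "u1 = u2"
  using assms strict_mono_eq[OF \<open>strict_mono f\<close>] by auto

context prob_space
begin

lemma integrable_bounded_compose:
  fixes X :: "'a \<Rightarrow> 'b::topological_space" and f :: "'b \<Rightarrow> real"
  assumes "X \<in> borel_measurable M" and "f \<in> borel_measurable borel" and "\<And>y. \<bar>f y\<bar> \<le> B"
  shows "integrable M (\<lambda>x. f (X x))"
  using assms by (intro integrable_const_bound[where B=B]) auto

lemma indep_var_bounded_compose:
  fixes X Y :: "'a \<Rightarrow> 'b::topological_space" and f g :: "'b \<Rightarrow> real"
  assumes indep: "indep_var borel X borel Y"
    and [measurable]: "X \<in> borel_measurable M" "Y \<in> borel_measurable M"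
      "f \<in> borel_measurable borel" "g \<in> borel_measurable borel"
    and f_bounded: "\<And>y. \<bar>f y\<bar> \<le> B" and g_bounded: "\<And>y. \<bar>g y\<bar> \<le> C"
  shows "integrable M (\<lambda>x. f (X x) * g (Y x))"
    and "expectation (\<lambda>x. f (X x) * g (Y x)) = expectation (\<lambda>x. f (X x)) * expectation (\<lambda>x. g (Y x))"
proof -
  have "indep_var borel (\<lambda>x. f (X x)) borel (\<lambda>x. g (Y x))"
    using indep_var_compose[OF indep, of f borel g borel] by (simp add: comp_def)
  moreover have "integrable M (\<lambda>x. f (X x))" "integrable M (\<lambda>x. g (Y x))"
    by (rule integrable_bounded_compose[OF _ _ f_bounded] integrable_bounded_compose[OF _ _ g_bounded];
        measurable)+
  ultimately show "integrable M (\<lambda>x. f (X x) * g (Y x))"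
    and "expectation (\<lambda>x. f (X x) * g (Y x)) = expectation (\<lambda>x. f (X x)) * expectation (\<lambda>x. g (Y x))"
    by (auto intro: indep_var_integrable indep_var_lebesgue_integral)
qed

lemma expectation_compose_distr_eq:
  fixes X Y :: "'a \<Rightarrow> 'b::topological_space" and f :: "'b \<Rightarrow> real"
  assumes [measurable]: "X \<in> borel_measurable M" "Y \<in> borel_measurable M" "f \<in> borel_measurable borel"
    and "distr M borel X = distr M borel Y"
  shows "expectation (\<lambda>x. f (X x)) = expectation (\<lambda>x. f (Y x))"
  using integral_distr[of X M borel f] integral_distr[of Y M borel f] assms(4) by simp

lemma expectation_cross_diff_eq_0:
  fixes U1 U2 V1 V2 :: "'a \<Rightarrow> real" and f :: "real \<Rightarrow> real"
  assumes [measurable]: "U1 \<in> borel_measurable M" "U2 \<in> borel_measurable M"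
      "V1 \<in> borel_measurable M" "V2 \<in> borel_measurable M" "f \<in> borel_measurable borel"
    and bounded: "\<And>y. \<bar>f y\<bar> \<le> B"
    and "distr M borel U1 = distr M borel U2"
    and "indep_var borel U1 borel V1" "indep_var borel U1 borel V2"
      "indep_var borel U2 borel V1" "indep_var borel U2 borel V2"
  defines "P \<equiv> \<lambda>x. (f (U1 x) - f (U2 x)) * (f (V2 x) - f (V1 x))"
  shows "integrable M P" and "expectation P = 0"
proof -
  have P_expand: "P = (\<lambda>x. f (U1 x) * f (V2 x) - f (U1 x) * f (V1 x)
      - f (U2 x) * f (V2 x) + f (U2 x) * f (V1 x))"
    unfolding P_def by (simp add: fun_eq_iff algebra_simps)
  note indep = indep_var_bounded_compose[where f=f and g=f, OF _ _ _ _ _ bounded bounded]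
  note terms = indep[OF assms(8)] indep[OF assms(9)] indep[OF assms(10)] indep[OF assms(11)]
  show "integrable M P"
    unfolding P_expand using terms by auto
  have "expectation (\<lambda>x. f (U1 x)) = expectation (\<lambda>x. f (U2 x))"
    using assms(7) by (intro expectation_compose_distr_eq) auto
  then show "expectation P = 0"
    unfolding P_expand using terms by (simp add: algebra_simps)
qed

end

lemma arctan_borel_measurable [measurable]: "arctan \<in> borel_measurable borel"
  by (intro borel_measurable_continuous_onI continuous_on_arctan continuous_on_id)

lemma strict_mono_arctan: "strict_mono arctan"
  by (simp add: strict_mono_def arctan_less_iff)

lemma abs_arctan_le: "\<bar>arctan y\<bar> \<le> pi / 2"
  using arctan_bounded[of y] by (simp add: abs_if)

theorem mainTheorem2:
  fixes M :: "'a measure" and U1 U2 V1 V2 :: "'a \<Rightarrow> real"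
  assumes "prob_space M"
    and "U1 \<in> borel_measurable M" and "U2 \<in> borel_measurable M"
    and "V1 \<in> borel_measurable M" and "V2 \<in> borel_measurable M"
    and "distr M borel U1 = distr M borel U2"
    and "prob_space.indep_var M borel U1 borel V1"
    and "prob_space.indep_var M borel U1 borel V2"
    and "prob_space.indep_var M borel U2 borel V1"
    and "prob_space.indep_var M borel U2 borel V2"
    and "AE x in M. U1 x + V1 x = U2 x + V2 x"
  shows "AE x in M. U1 x = U2 x"
proof -
  interpret prob_space M by fact
  define P where "P x = (arctan (U1 x) - arctan (U2 x)) * (arctan (V2 x) - arctan (V1 x))" for x
  have "integrable M P" and "expectation P = 0"
    using expectation_cross_diff_eq_0[OF assms(2-5) arctan_borel_measurable abs_arctan_le assms(6-10)]
    by (simp_all add: P_def[abs_def])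
  moreover have "AE x in M. 0 \<le> P x"
    using assms(11) by eventually_elim (simp add: P_def strict_mono_cross_diff_nonneg[OF strict_mono_arctan])
  ultimately have "AE x in M. P x = 0"
    by (simp add: integral_nonneg_eq_0_iff_AE)
  with assms(11) show ?thesis
    by eventually_elim (auto simp: P_def intro: strict_mono_cross_diff_eq_0_imp_eq[OF strict_mono_arctan])
qed

end
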